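(* Let $\phi=\tilde p/p$ be a degree $(n,1)$ rational inner function as in the context, $\alpha\in\mathbb{T}$ and $\gamma\in\mathbb{T}$. Then $\{\gamma\}\times\mathbb{T}\subseteq\mathcal{C}_\alpha$ if and only if $\gamma=\tau_k$ for some $k$ and $\phi^*(\tau_k,\lambda_k)=\alpha$.
   Context: $\mathbb{D}$ is the open unit disk, $\mathbb{T}$ the unit circle. Fix $n\ge1$. Let $p\in\mathbb{C}[z_1,z_2]$ have no zeros on $\mathbb{D}^2$, degree at most $n$ in $z_1$ and at most $1$ in $z_2$, and let $\tilde p(z)=z_1^nz_2\overline{p(1/\bar z_1,1/\bar z_2)}$; assume $\tilde p$ has degree exactly $(n,1)$ and $p,\tilde p$ have no common factor, so $\phi=\tilde p/p$ is a degree $(n,1)$ rational inner function. The zeros of $p$ on $\mathbb{T}^2$ are finitely many points $(\tau_1,\lambda_1),\dots,(\tau_m,\lambda_m)$; the non-tangential limit $\phi^*$ exists and is unimodular at every point of $\mathbb{T}^2$. $\mathcal{C}_\alpha=\{\zeta\in\mathbb{T}^2:\tilde p(\zeta)=\alpha p(\zeta)\}$. *)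

theory Defs
  imports "HOL-Analysis.Analysis" "HOL-Computational_Algebra.Polynomial"
begin

text \<open>Polynomials in C[z1,z2] are represented as elements of (C[z1])[z2], i.e. the type
  complex poly poly: the outer variable is z2, the coefficients are polynomials in z1.\<close>

definition ev2 :: "complex poly poly \<Rightarrow> complex \<Rightarrow> complex \<Rightarrow> complex" where
  "ev2 P z1 z2 = poly (map_poly (\<lambda>q. poly q z1) P) z2"

definition bideg_le :: "nat \<Rightarrow> complex poly poly \<Rightarrow> bool" where
  "bideg_le n P \<longleftrightarrow> degree P \<le> 1 \<and> (\<forall>i. degree (coeff P i) \<le> n)"

definition bideg_eq :: "nat \<Rightarrow> complex poly poly \<Rightarrow> bool" where
  "bideg_eq n P \<longleftrightarrow> degree P = 1 \<and> (\<forall>i. degree (coeff P i) \<le> n)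
      \<and> (\<exists>i. degree (coeff P i) = n)"

text \<open>The reflection tilde p (z) = z1^n z2 conj(p(1/conj z1, 1/conj z2)), written out on
  coefficients: the coefficient of z1^j z2^k is conj of the coefficient of z1^(n-j) z2^(1-k).\<close>
definition refl_poly :: "nat \<Rightarrow> complex poly poly \<Rightarrow> complex poly poly" where
  "refl_poly n P = (\<Sum>k\<le>1. \<Sum>j\<le>n.
      monom (monom (cnj (coeff (coeff P (1 - k)) (n - j))) j) k)"

definition torus2 :: "(complex \<times> complex) set" where
  "torus2 = {z. cmod (fst z) = 1 \<and> cmod (snd z) = 1}"

definition bidisk :: "(complex \<times> complex) set" where
  "bidisk = {z. cmod (fst z) < 1 \<and> cmod (snd z) < 1}"

definition nt_region :: "real \<Rightarrow> complex \<times> complex \<Rightarrow> (complex \<times> complex) set" where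
  "nt_region c \<zeta> = {z \<in> bidisk. norm (z - \<zeta>) < c * (1 - max (cmod (fst z)) (cmod (snd z)))}"

definition nt_tendsto :: "(complex \<times> complex \<Rightarrow> complex) \<Rightarrow> complex \<times> complex \<Rightarrow> complex \<Rightarrow> bool" where
  "nt_tendsto f \<zeta> L \<longleftrightarrow> (\<forall>c>0. (f \<longlongrightarrow> L) (at \<zeta> within nt_region c \<zeta>))"

definition nt_limit :: "(complex \<times> complex \<Rightarrow> complex) \<Rightarrow> complex \<times> complex \<Rightarrow> complex" where
  "nt_limit f \<zeta> = (THE L. nt_tendsto f \<zeta> L)"

definition rif :: "nat \<Rightarrow> complex poly poly \<Rightarrow> complex \<times> complex \<Rightarrow> complex" where
  "rif n P z = ev2 (refl_poly n P) (fst z) (snd z) / ev2 P (fst z) (snd z)"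

definition clevel :: "nat \<Rightarrow> complex poly poly \<Rightarrow> complex \<Rightarrow> (complex \<times> complex) set" where
  "clevel n P \<alpha> = {\<zeta> \<in> torus2. ev2 (refl_poly n P) (fst \<zeta>) (snd \<zeta>) = \<alpha> * ev2 P (fst \<zeta>) (snd \<zeta>)}"

end

theory Submission
  imports Defs
begin

(* Write P(z1,z2) = A(z1) + B(z1) z2, let R be the reflection of P, a = A(gamma) and b = B(gamma).
   On the circle |gamma| = 1 the slices are P(gamma,z) = a + b z and
   R(gamma,z) = gamma^n (conj b + conj a z), and coprimality of P and R rules out a = b = 0.
   The vertical circle lies in C_alpha iff R(gamma,.) = alpha P(gamma,.); this forces b <> 0
   and |a| = |b|, so P(gamma,.) vanishes exactly at mu = -a/b, a point of the circle.
   Conversely, at a zero (gamma,mu) of P on the torus the two slices are proportional,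
   R(gamma,.) = c P(gamma,.), and it remains to show that the non-tangential limit of R/P
   at (gamma,mu) is c. Along the segment t -> (gamma (1-t), mu (1 - l t)) both P and R vanish
   to first order, so R/P tends to the quotient of their derivatives, which has the form
   (u + l c e)/(v + l e) with e = mu b <> 0. As the limit cannot depend on the slope l, it is c. *)

lemma ev2_degree_le_1:
  assumes "degree Q \<le> 1"
  shows "ev2 Q z1 z2 = poly (coeff Q 0) z1 + poly (coeff Q 1) z1 * z2"
proof -
  have "Q = [:coeff Q 0, coeff Q 1:]"
    using assms by (intro poly_eqI) (auto simp: coeff_pCons coeff_eq_0 split: nat.split)
  then have "ev2 Q z1 z2 = ev2 [:coeff Q 0, coeff Q 1:] z1 z2" by simp
  then show ?thesis
    by (simp add: ev2_def map_poly_pCons)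
qed

lemma ev2_map_pderiv_degree_le_1:
  assumes "degree Q \<le> 1"
  shows "ev2 (map_poly pderiv Q) z1 z2 = poly (pderiv (coeff Q 0)) z1 + poly (pderiv (coeff Q 1)) z1 * z2"
  using ev2_degree_le_1[OF order.trans[OF map_poly_degree_leq assms]]
  by (simp add: coeff_map_poly)

lemma linear_factor_dvd_if_slice_vanishes:
  fixes Q :: "complex poly poly"
  assumes "\<forall>z. ev2 Q g z = 0"
  shows "[:[:-g, 1:]:] dvd Q"
proof -
  have "map_poly (\<lambda>q. poly q g) Q = 0"
    using assms poly_all_0_iff_0 unfolding ev2_def by blast
  then have "poly (coeff Q i) g = 0" for i
    by (metis coeff_0 coeff_map_poly poly_0)
  then show ?thesis
    unfolding const_poly_dvd_iff by (simp add: poly_eq_0_iff_dvd)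
qed

lemma not_is_unit_linear_factor: "\<not> is_unit [:[:-(g::complex), 1:]:]"
  by (simp add: is_unit_const_poly_iff is_unit_iff_degree)

definition conj_reflect :: "nat \<Rightarrow> complex poly \<Rightarrow> complex poly" where
  "conj_reflect n q = (\<Sum>j\<le>n. monom (cnj (coeff q (n - j))) j)"

lemma coeff_refl_poly: "k \<le> 1 \<Longrightarrow> coeff (refl_poly n P) k = conj_reflect n (coeff P (1 - k))"
  by (auto simp: refl_poly_def conj_reflect_def coeff_sum coeff_monom atMost_Suc le_Suc_eq)

lemma degree_refl_poly: "degree (refl_poly n P) \<le> 1"
  unfolding refl_poly_def by (intro degree_sum_le order.trans[OF degree_monom_le]) auto

lemma poly_conj_reflect_unimodular:
  assumes "degree q \<le> n" and "cmod z = 1"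
  shows "poly (conj_reflect n q) z = z ^ n * cnj (poly q z)"
proof -
  have "z * cnj z = 1" using assms(2) by (simp add: complex_norm_square[symmetric])
  then have z_pow: "z ^ n * cnj z ^ (n - j) = z ^ j" if "j \<le> n" for j
  proof -
    have "z ^ n * cnj z ^ (n - j) = z ^ j * (z * cnj z) ^ (n - j)"
      using that by (simp add: power_mult_distrib flip: power_add)
    with \<open>z * cnj z = 1\<close> show ?thesis by simp
  qed
  have "poly (conj_reflect n q) z = (\<Sum>j\<le>n. z ^ n * cnj (coeff q (n - j) * z ^ (n - j)))"
    unfolding conj_reflect_def poly_sum poly_monom
    by (intro sum.cong refl) (simp add: z_pow mult.left_commute[of "z ^ n"])
  also have "\<dots> = z ^ n * cnj (\<Sum>j\<le>n. coeff q j * z ^ j)"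
    using sum.atLeastAtMost_rev[of "\<lambda>j. coeff q j * z ^ j" 0 n]
    by (simp add: sum_distrib_left atLeast0AtMost)
  also have "(\<Sum>j\<le>n. coeff q j * z ^ j) = poly q z"
    by (subst (2) poly_as_sum_of_monoms'[OF assms(1), symmetric]) (simp add: poly_sum poly_monom)
  finally show ?thesis .
qed

lemma ev2_refl_poly_unimodular:
  assumes "bideg_le n P" and "cmod g = 1"
  shows "ev2 (refl_poly n P) g z = g ^ n * (cnj (poly (coeff P 1) g) + cnj (poly (coeff P 0) g) * z)"
proof -
  have "degree (coeff P k) \<le> n" for k
    using assms(1) by (simp add: bideg_le_def)
  then show ?thesis
    using ev2_degree_le_1[OF degree_refl_poly]
    by (simp add: coeff_refl_poly poly_conj_reflect_unimodular[OF _ assms(2)] algebra_simps)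
qed

lemma slice_nonzero_if_coprime_refl_poly:
  assumes "bideg_le n P" and "cmod \<gamma> = 1"
    and "\<not> (\<exists>q. q dvd P \<and> q dvd refl_poly n P \<and> \<not> is_unit q)"
  shows "poly (coeff P 0) \<gamma> \<noteq> 0 \<or> poly (coeff P 1) \<gamma> \<noteq> 0"
proof (rule ccontr)
  assume "\<not> ?thesis"
  moreover have "degree P \<le> 1"
    using assms(1) by (simp add: bideg_le_def)
  ultimately have "[:[:-\<gamma>, 1:]:] dvd P" "[:[:-\<gamma>, 1:]:] dvd refl_poly n P"
    by (simp_all add: linear_factor_dvd_if_slice_vanishes ev2_degree_le_1
        ev2_refl_poly_unimodular[OF assms(1,2)])
  with assms(3) not_is_unit_linear_factor show False
    by blast
qed

lemma ev2_slices_eq_on_circle_iff: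
  assumes "degree P \<le> 1" and "degree R \<le> 1"
  shows "(\<forall>z. cmod z = 1 \<longrightarrow> ev2 R g z = c * ev2 P g z) \<longleftrightarrow> (\<forall>z. ev2 R g z = c * ev2 P g z)"
proof
  assume on_circle: "\<forall>z. cmod z = 1 \<longrightarrow> ev2 R g z = c * ev2 P g z"
  define u where "u = poly (coeff R 0) g"
  define v where "v = poly (coeff R 1) g"
  define u' where "u' = c * poly (coeff P 0) g"
  define v' where "v' = c * poly (coeff P 1) g"
  have "u + v = u' + v'" "u - v = u' - v'"
    using on_circle[rule_format, of 1] on_circle[rule_format, of "-1"]
    by (simp_all add: ev2_degree_le_1[OF assms(1)] ev2_degree_le_1[OF assms(2)] u_def v_def u'_def v'_def algebra_simps)
  moreover have "x = ((x + y) + (x - y)) / 2" "y = ((x + y) - (x - y)) / 2" for x y :: complex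
    by simp_all
  ultimately have "u = u'" "v = v'"
    by metis+
  then show "\<forall>z. ev2 R g z = c * ev2 P g z"
    by (simp add: ev2_degree_le_1[OF assms(1)] ev2_degree_le_1[OF assms(2)] u_def v_def u'_def v'_def algebra_simps)
qed simp

lemma vertical_circle_subset_clevel_iff:
  assumes "bideg_le n P" and "cmod \<gamma> = 1"
  shows "{\<gamma>} \<times> {z. cmod z = 1} \<subseteq> clevel n P \<alpha> \<longleftrightarrow>
    (\<forall>z. ev2 (refl_poly n P) \<gamma> z = \<alpha> * ev2 P \<gamma> z)"
proof -
  have "{\<gamma>} \<times> {z. cmod z = 1} \<subseteq> clevel n P \<alpha> \<longleftrightarrow>
      (\<forall>z. cmod z = 1 \<longrightarrow> ev2 (refl_poly n P) \<gamma> z = \<alpha> * ev2 P \<gamma> z)"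
    using assms(2) by (auto simp: clevel_def torus2_def)
  also have "\<dots> \<longleftrightarrow> (\<forall>z. ev2 (refl_poly n P) \<gamma> z = \<alpha> * ev2 P \<gamma> z)"
    using assms(1) degree_refl_poly by (intro ev2_slices_eq_on_circle_iff) (simp_all add: bideg_le_def)
  finally show ?thesis .
qed

lemma conj_linear_root_unimodular:
  fixes a b w \<alpha> :: complex
  assumes "cmod w = 1" "cmod \<alpha> = 1" and "a \<noteq> 0 \<or> b \<noteq> 0"
    and "\<forall>z. w * (cnj b + cnj a * z) = \<alpha> * (a + b * z)"
  shows "b \<noteq> 0" and "cmod (- a / b) = 1"
proof -
  have "w * cnj a = \<alpha> * b"
    using assms(4)[rule_format, of 0] assms(4)[rule_format, of 1] by (simp add: algebra_simps)
  then have "cmod a = cmod b"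
    using assms(1,2) by (metis complex_mod_cnj mult_cancel_right1 norm_mult)
  with assms(3) show "b \<noteq> 0"
    by auto
  with \<open>cmod a = cmod b\<close> show "cmod (- a / b) = 1"
    by (simp add: norm_divide)
qed

lemma conj_linear_proportional_at_unimodular_root:
  fixes a b \<mu> w :: complex
  assumes "a \<noteq> 0 \<or> b \<noteq> 0" and "cmod \<mu> = 1" "a + b * \<mu> = 0"
  shows "b \<noteq> 0" and "\<forall>z. w * (cnj b + cnj a * z) = (w * cnj a / b) * (a + b * z)"
proof -
  have "a = - (b * \<mu>)"
    using assms(3) by (simp add: eq_neg_iff_add_eq_0)
  with assms(1) show "b \<noteq> 0"
    by auto
  have "\<mu> * cnj \<mu> = 1"
    using assms(2) by (simp flip: complex_norm_square)
  have "a * cnj a = (b * cnj b) * (\<mu> * cnj \<mu>)"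
    using \<open>a = - (b * \<mu>)\<close> by (simp add: mult_ac)
  with \<open>\<mu> * cnj \<mu> = 1\<close> have "a * cnj a = b * cnj b"
    by simp
  with \<open>b \<noteq> 0\<close> show "\<forall>z. w * (cnj b + cnj a * z) = (w * cnj a / b) * (a + b * z)"
    by (simp add: field_simps)
qed

lemma norm_shrink_unimodular:
  assumes "cmod w = 1" "0 \<le> s" "s \<le> 1"
  shows "cmod (w * of_real (1 - s)) = 1 - s" and "cmod (w * of_real (1 - s) - w) = s"
proof -
  show "cmod (w * of_real (1 - s)) = 1 - s"
    using assms by (simp add: norm_mult del: of_real_diff)
  have "w * of_real (1 - s) - w = - (w * of_real s)"
    by (simp add: algebra_simps)
  then show "cmod (w * of_real (1 - s) - w) = s"
    using assms by (simp add: norm_mult)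
qed

definition slope_path :: "complex \<Rightarrow> complex \<Rightarrow> real \<Rightarrow> real \<Rightarrow> complex \<times> complex" where
  "slope_path g m l t = (g * of_real (1 - t), m * of_real (1 - l * t))"

lemma slope_path_in_nt_region:
  assumes "cmod g = 1" "cmod m = 1" "1 \<le> l" "l \<le> 3" "0 < t" "t < 1/4"
  shows "slope_path g m l t \<in> nt_region 5 (g, m) - {(g, m)}"
proof -
  have "t \<le> l * t" "l * t \<le> 3 * t"
    using assms by (simp_all add: mult_le_cancel_right1 mult_right_mono)
  note shrink_fst = norm_shrink_unimodular[OF assms(1), of t]
    and shrink_snd = norm_shrink_unimodular[OF assms(2), of "l * t"]
  have norm_path: "cmod (fst (slope_path g m l t)) = 1 - t" "cmod (snd (slope_path g m l t)) = 1 - l * t"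
    using shrink_fst shrink_snd \<open>t \<le> l * t\<close> \<open>l * t \<le> 3 * t\<close> assms(5,6)
    by (simp_all add: slope_path_def)
  have "norm (slope_path g m l t - (g, m)) \<le> cmod (g * of_real (1 - t) - g) + cmod (m * of_real (1 - l * t) - m)"
    unfolding slope_path_def using norm_Pair_le by simp
  also have "\<dots> < 5 * (1 - max (1 - t) (1 - l * t))"
    using shrink_fst shrink_snd \<open>t \<le> l * t\<close> \<open>l * t \<le> 3 * t\<close> assms(5,6) by simp
  finally have "norm (slope_path g m l t - (g, m))
      < 5 * (1 - max (cmod (fst (slope_path g m l t))) (cmod (snd (slope_path g m l t))))"
    unfolding norm_path .
  moreover have "slope_path g m l t \<in> bidisk"
    using norm_path \<open>t \<le> l * t\<close> assms(5) by (simp add: bidisk_def)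
  moreover have "slope_path g m l t \<noteq> (g, m)"
    using shrink_fst(2) assms(5,6) by (auto simp: slope_path_def)
  ultimately show ?thesis
    by (simp add: nt_region_def)
qed

lemma filterlim_slope_path:
  assumes "cmod g = 1" "cmod m = 1" "1 \<le> l" "l \<le> 3"
  shows "filterlim (slope_path g m l) (at (g, m) within nt_region 5 (g, m)) (at_right 0)"
proof -
  have "(slope_path g m l \<longlongrightarrow> slope_path g m l 0) (at_right 0)"
    unfolding slope_path_def by (intro tendsto_intros)
  then have "(slope_path g m l \<longlongrightarrow> (g, m)) (at_right 0)"
    by (simp add: slope_path_def)
  moreover have "\<forall>\<^sub>F t in at_right 0. slope_path g m l t \<in> nt_region 5 (g, m) - {(g, m)}"
    by (rule eventually_at_rightI[of 0 "1/4"]) (use slope_path_in_nt_region[OF assms] in auto)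
  ultimately show ?thesis
    unfolding filterlim_at by (auto elim: eventually_mono)
qed

lemma nt_tendsto_along_slope_path:
  assumes "nt_tendsto F (g, m) L" "cmod g = 1" "cmod m = 1" "1 \<le> l" "l \<le> 3"
  shows "((\<lambda>t. F (slope_path g m l t)) \<longlongrightarrow> L) (at_right 0)"
proof -
  have "(F \<longlongrightarrow> L) (at (g, m) within nt_region 5 (g, m))"
    using assms(1) by (simp add: nt_tendsto_def)
  then show ?thesis
    by (rule filterlim_compose[OF _ filterlim_slope_path[OF assms(2-5)]])
qed

(* The limit is the derivative of t -> Q(slope_path g m l t) at t = 0. *)
lemma ev2_slope_path_over_t_tendsto:
  fixes Q :: "complex poly poly"
  assumes "degree Q \<le> 1" and "ev2 Q g m = 0"
  shows "((\<lambda>t. ev2 Q (fst (slope_path g m l t)) (snd (slope_path g m l t)) / of_real t) \<longlongrightarrow>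
      - (g * ev2 (map_poly pderiv Q) g m + of_real l * (m * poly (coeff Q 1) g))) (at_right 0)"
proof -
  define D where "D = - (g * ev2 (map_poly pderiv Q) g m + of_real l * (m * poly (coeff Q 1) g))"
  define h where "h s = ev2 Q (g * (1 - s)) (m * (1 - of_real l * s))" for s
  have h: "h s = poly (coeff Q 0) (g * (1 - s)) + poly (coeff Q 1) (g * (1 - s)) * (m * (1 - of_real l * s))" for s
    unfolding h_def by (rule ev2_degree_le_1[OF assms(1)])
  have "(h has_field_derivative D) (at 0)"
    unfolding h D_def ev2_map_pderiv_degree_le_1[OF assms(1)]
    by (auto intro!: derivative_eq_intros simp: algebra_simps)
  moreover have "h 0 = 0" using assms(2) by (simp add: h_def)
  ultimately have "((\<lambda>s. h s / s) \<longlongrightarrow> D) (at 0)"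
    by (simp add: has_field_derivative_iff)
  moreover have "filterlim (\<lambda>t::real. of_real t :: complex) (at 0) (at_right 0)"
    unfolding filterlim_at
    by (auto intro!: tendsto_eq_intros eventually_at_rightI[of 0 1])
  ultimately have "((\<lambda>t. h (of_real t) / of_real t) \<longlongrightarrow> D) (at_right 0)"
    by (rule filterlim_compose)
  then show ?thesis
    unfolding D_def by (simp add: h_def slope_path_def)
qed

lemma ev2_ratio_slope_path_tendsto:
  fixes P R :: "complex poly poly"
  assumes deg: "degree P \<le> 1" "degree R \<le> 1" and root: "ev2 P g m = 0" "ev2 R g m = 0"
    and nonzero: "g * ev2 (map_poly pderiv P) g m + of_real l * (m * poly (coeff P 1) g) \<noteq> 0"
  shows "((\<lambda>t. ev2 R (fst (slope_path g m l t)) (snd (slope_path g m l t))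
               / ev2 P (fst (slope_path g m l t)) (snd (slope_path g m l t)))
      \<longlongrightarrow> (g * ev2 (map_poly pderiv R) g m + of_real l * (m * poly (coeff R 1) g))
          / (g * ev2 (map_poly pderiv P) g m + of_real l * (m * poly (coeff P 1) g))) (at_right 0)"
proof -
  let ?P = "\<lambda>t. ev2 P (fst (slope_path g m l t)) (snd (slope_path g m l t))"
  let ?R = "\<lambda>t. ev2 R (fst (slope_path g m l t)) (snd (slope_path g m l t))"
  have "((\<lambda>t. (?R t / of_real t) / (?P t / of_real t))
      \<longlongrightarrow> (g * ev2 (map_poly pderiv R) g m + of_real l * (m * poly (coeff R 1) g))
          / (g * ev2 (map_poly pderiv P) g m + of_real l * (m * poly (coeff P 1) g))) (at_right 0)"
    by (rule tendsto_divide[OF ev2_slope_path_over_t_tendsto[OF deg(2) root(2)]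
          ev2_slope_path_over_t_tendsto[OF deg(1) root(1)], unfolded minus_divide_divide])
      (simp only: neg_equal_0_iff_equal nonzero not_False_eq_True)
  moreover have "\<forall>\<^sub>F t in at_right 0. (?R t / of_real t) / (?P t / of_real t) = ?R t / ?P t"
    by (rule eventually_at_rightI[of 0 1]) auto
  ultimately show ?thesis
    by (rule tendsto_cong[THEN iffD1, rotated])
qed

lemma affine_nonzero_at_two_points:
  fixes x y :: complex
  assumes "y \<noteq> 0"
  obtains l1 l2 :: real where "l1 \<in> {1..3}" "l2 \<in> {1..3}" "l1 \<noteq> l2"
    and "x + of_real l1 * y \<noteq> 0" and "x + of_real l2 * y \<noteq> 0"
proof (cases "x + y = 0")
  case True
  then have "x = - y"
    by (simp add: eq_neg_iff_add_eq_0)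
  with assms have "x + of_real 2 * y \<noteq> 0" "x + of_real 3 * y \<noteq> 0"
    by (simp_all add: algebra_simps)
  then show ?thesis
    by (intro that[of 2 3]) auto
next
  case False
  show ?thesis
  proof (cases "x + of_real 2 * y = 0")
    case True
    then have "x = - (2 * y)"
      by (simp add: eq_neg_iff_add_eq_0)
    with assms have "x + of_real 3 * y \<noteq> 0"
      by (simp add: algebra_simps)
    with False show ?thesis
      by (intro that[of 1 3]) auto
  next
    case False
    with \<open>x + y \<noteq> 0\<close> show ?thesis
      by (intro that[of 1 2]) auto
  qed
qed

lemma nt_tendsto_ratio_eq_slice_factor:
  fixes P R :: "complex poly poly"
  assumes deg: "degree P \<le> 1" "degree R \<le> 1"
    and unimodular: "cmod g = 1" "cmod m = 1"
    and root: "ev2 P g m = 0" and simple: "poly (coeff P 1) g \<noteq> 0"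
    and slice: "\<forall>z. ev2 R g z = c * ev2 P g z"
    and lim: "nt_tendsto (\<lambda>z. ev2 R (fst z) (snd z) / ev2 P (fst z) (snd z)) (g, m) L"
  shows "L = c"
proof -
  define mb where "mb = m * poly (coeff P 1) g"
  define DP where "DP = g * ev2 (map_poly pderiv P) g m"
  define DR where "DR = g * ev2 (map_poly pderiv R) g m"
  have root_R: "ev2 R g m = 0"
    using slice root by simp
  have coeff_R: "m * poly (coeff R 1) g = c * mb"
    using slice[rule_format, of 0] slice[rule_format, of 1]
    by (simp add: ev2_degree_le_1[OF deg(1)] ev2_degree_le_1[OF deg(2)] mb_def algebra_simps)
  have along_path: "L * (DP + of_real l * mb) = DR + of_real l * (c * mb)"
    if "l \<in> {1..3}" and nonzero: "DP + of_real l * mb \<noteq> 0" for l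
  proof -
    have "((\<lambda>t. ev2 R (fst (slope_path g m l t)) (snd (slope_path g m l t))
                 / ev2 P (fst (slope_path g m l t)) (snd (slope_path g m l t)))
        \<longlongrightarrow> (DR + of_real l * (c * mb)) / (DP + of_real l * mb)) (at_right 0)"
      using ev2_ratio_slope_path_tendsto[OF deg root root_R] nonzero
      unfolding DP_def DR_def mb_def coeff_R[unfolded mb_def] by blast
    moreover have "((\<lambda>t. ev2 R (fst (slope_path g m l t)) (snd (slope_path g m l t))
                 / ev2 P (fst (slope_path g m l t)) (snd (slope_path g m l t))) \<longlongrightarrow> L) (at_right 0)"
      using nt_tendsto_along_slope_path[OF lim unimodular] that(1) by simp
    ultimately have "(DR + of_real l * (c * mb)) / (DP + of_real l * mb) = L"
      by (rule tendsto_unique[OF trivial_limit_at_right_real])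
    with nonzero show ?thesis
      by (auto simp: divide_eq_eq mult.commute)
  qed
  have "mb \<noteq> 0"
    using unimodular simple by (auto simp: mb_def)
  then obtain l1 l2 where l: "l1 \<in> {1..3}" "l2 \<in> {1..3}" "l1 \<noteq> l2"
    and nonzero: "DP + of_real l1 * mb \<noteq> 0" "DP + of_real l2 * mb \<noteq> 0"
    by (rule affine_nonzero_at_two_points)
  have "L * (of_real (l1 - l2) * mb) = L * (DP + of_real l1 * mb) - L * (DP + of_real l2 * mb)"
    by (simp add: algebra_simps)
  also have "\<dots> = c * (of_real (l1 - l2) * mb)"
    using along_path[OF l(1) nonzero(1)] along_path[OF l(2) nonzero(2)]
    by (simp add: algebra_simps)
  finally show ?thesis
    using \<open>mb \<noteq> 0\<close> \<open>l1 \<noteq> l2\<close> by simp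
qed

lemma nt_limit_rif_eq_slice_factor:
  assumes "bideg_le n P" and "cmod \<gamma> = 1" "cmod \<mu> = 1"
    and "ev2 P \<gamma> \<mu> = 0" "poly (coeff P 1) \<gamma> \<noteq> 0"
    and "\<forall>z. ev2 (refl_poly n P) \<gamma> z = c * ev2 P \<gamma> z"
    and "\<exists>L. nt_tendsto (rif n P) (\<gamma>, \<mu>) L"
  shows "nt_limit (rif n P) (\<gamma>, \<mu>) = c"
proof -
  have "degree P \<le> 1"
    using assms(1) by (simp add: bideg_le_def)
  have "rif n P = (\<lambda>z. ev2 (refl_poly n P) (fst z) (snd z) / ev2 P (fst z) (snd z))"
    by (simp add: rif_def fun_eq_iff)
  then have unique: "L = c" if "nt_tendsto (rif n P) (\<gamma>, \<mu>) L" for L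
    using nt_tendsto_ratio_eq_slice_factor[OF \<open>degree P \<le> 1\<close> degree_refl_poly assms(2-6)] that
    by simp
  with assms(7) have "nt_tendsto (rif n P) (\<gamma>, \<mu>) c"
    by blast
  then show ?thesis
    unfolding nt_limit_def using unique by (rule the_equality)
qed

theorem lemma3p4:
  fixes n :: nat and P :: "complex poly poly" and \<alpha> \<gamma> :: complex
  assumes "n \<ge> 1"
    and "bideg_le n P"
    and "\<forall>z \<in> bidisk. ev2 P (fst z) (snd z) \<noteq> 0"
    and "bideg_eq n (refl_poly n P)"
    and "\<not> (\<exists>q. q dvd P \<and> q dvd refl_poly n P \<and> \<not> is_unit q)"
    and "\<forall>\<zeta> \<in> torus2. \<exists>L. nt_tendsto (rif n P) \<zeta> L"
    and "cmod \<alpha> = 1" and "cmod \<gamma> = 1"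
  shows "{\<gamma>} \<times> {z. cmod z = 1} \<subseteq> clevel n P \<alpha> \<longleftrightarrow>
    (\<exists>\<mu>. (\<gamma>, \<mu>) \<in> torus2 \<and> ev2 P \<gamma> \<mu> = 0 \<and> nt_limit (rif n P) (\<gamma>, \<mu>) = \<alpha>)"
proof -
  define a where "a = poly (coeff P 0) \<gamma>"
  define b where "b = poly (coeff P 1) \<gamma>"
  have slice_P: "ev2 P \<gamma> z = a + b * z" for z
    using assms(2) by (simp add: ev2_degree_le_1 bideg_le_def a_def b_def)
  have slice_R: "ev2 (refl_poly n P) \<gamma> z = \<gamma> ^ n * (cnj b + cnj a * z)" for z
    unfolding a_def b_def by (rule ev2_refl_poly_unimodular[OF assms(2,8)])
  have "a \<noteq> 0 \<or> b \<noteq> 0"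
    unfolding a_def b_def by (rule slice_nonzero_if_coprime_refl_poly[OF assms(2,8,5)])
  have nt_limit_eq: "nt_limit (rif n P) (\<gamma>, \<mu>) = c"
    if "cmod \<mu> = 1" "ev2 P \<gamma> \<mu> = 0" "b \<noteq> 0" "\<forall>z. ev2 (refl_poly n P) \<gamma> z = c * ev2 P \<gamma> z" for \<mu> c
    using nt_limit_rif_eq_slice_factor[OF assms(2,8) that(1,2) _ that(4)] that(1,3) assms(6,8)
    by (simp add: a_def b_def torus2_def)
  show ?thesis
  proof
    assume "{\<gamma>} \<times> {z. cmod z = 1} \<subseteq> clevel n P \<alpha>"
    then have proportional: "\<forall>z. ev2 (refl_poly n P) \<gamma> z = \<alpha> * ev2 P \<gamma> z"
      using vertical_circle_subset_clevel_iff[OF assms(2,8)] by blast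
    then have "b \<noteq> 0" "cmod (- a / b) = 1"
      using conj_linear_root_unimodular[OF _ assms(7) \<open>a \<noteq> 0 \<or> b \<noteq> 0\<close>, of "\<gamma> ^ n"] assms(8)
      by (simp_all add: slice_P slice_R norm_power)
    moreover have "ev2 P \<gamma> (- a / b) = 0"
      using \<open>b \<noteq> 0\<close> by (simp add: slice_P)
    ultimately show "\<exists>\<mu>. (\<gamma>, \<mu>) \<in> torus2 \<and> ev2 P \<gamma> \<mu> = 0 \<and> nt_limit (rif n P) (\<gamma>, \<mu>) = \<alpha>"
      using nt_limit_eq[OF _ _ _ proportional] assms(8)
      by (intro exI[of _ "- a / b"]) (simp add: torus2_def)
  next
    assume "\<exists>\<mu>. (\<gamma>, \<mu>) \<in> torus2 \<and> ev2 P \<gamma> \<mu> = 0 \<and> nt_limit (rif n P) (\<gamma>, \<mu>) = \<alpha>"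
    then obtain \<mu> where \<mu>: "cmod \<mu> = 1" "ev2 P \<gamma> \<mu> = 0" "nt_limit (rif n P) (\<gamma>, \<mu>) = \<alpha>"
      by (auto simp: torus2_def)
    have "a + b * \<mu> = 0"
      using \<mu>(2) by (simp add: slice_P)
    note root = \<open>a \<noteq> 0 \<or> b \<noteq> 0\<close> \<mu>(1) this
    note proportional = conj_linear_proportional_at_unimodular_root(2)[OF root, of "\<gamma> ^ n",
        folded slice_P slice_R]
    have "\<alpha> = \<gamma> ^ n * cnj a / b"
      using nt_limit_eq[OF \<mu>(1,2) conj_linear_proportional_at_unimodular_root(1)[OF root] proportional] \<mu>(3)
      by simp
    with proportional \<mu>(2) show "{\<gamma>} \<times> {z. cmod z = 1} \<subseteq> clevel n P \<alpha>"
      by (simp add: vertical_circle_subset_clevel_iff[OF assms(2,8)] slice_P)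
  qed
qed

end
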